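(* Let $(\mathcal{G},\mu)$ be an edge partition and $B\subseteq\mathcal{N}$. For every $\zeta\in\Lambda_\mathcal{G}(B)$, \[\psi^{-1}(\zeta)=\Big\{(\zeta\cap\mathcal{E}^+)\cup E \;:\; E\in\underset{e\in\zeta\cap\mathcal{E}^-}{\odot}\big(\{e\}\cup\mu(e)\big)\Big\}.\]
   Context: $R$ is a partially ordered ring; $\mathcal{G}=(\mathcal{N},\mathcal{E})$ is a multidigraph with source/target maps $s,t$, no self-loops, $\mathcal{N}=\{1,\dots,m+1\}$, labeling $\pi\colon\mathcal{E}\to R$. Trees/forests are subgraphs whose underlying undirected graph is acyclic (connected for trees); a tree is rooted at $N$ if $N$ is its only node without outgoing edges; spanning forests have node set $\mathcal{N}$ and are identified with their edge sets. $\Theta_\mathcal{G}(B)$ is the set of spanning forests with $|B|$ connected components, each a tree rooted at a node of $B$. A cycle is a closed directed path with no repeated nodes. $\mathcal{E}^-=\{e:\pi(e)\in R_{<0}\}$, $\mathcal{E}^+=\{e:\pi(e)\in R_{>0}\}$. An edge partition $(\mathcal{G},\mu)$, $\mu\colon\mathcal{E}^-\to\mathcal{P}(\mathcal{E}^+)$, satisfies (i) $\mathcal{E}=\mathcal{E}^+\sqcup\mathcal{E}^-$; (ii) every cycle contains at most one edge of $\mathcal{E}^-$; (iii) for $e\in\mathcal{E}^-$: (a) $e'\in\mu(e)\Rightarrow s(e')=s(e)$; (b) $e'\in\mu(e)\Rightarrow$ every cycle containing $e'$ contains $t(e)$; (c) $\mu(e)\cap\mu(e')=\emptyset$ for $e\ne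 e'$. $\operatorname{im}\mu=\bigcup_e\mu(e)$, $\mu^*\colon\operatorname{im}\mu\to\mathcal{E}^-$, $\mu^*(e')=e$ if $e'\in\mu(e)$. For $\zeta\in\Theta_\mathcal{G}(B)$, $\mathcal{E}_\zeta=\{E\subseteq\zeta\cap\operatorname{im}\mu:(\zeta\setminus E)\cup\mu^*(E)\in\Theta_\mathcal{G}(B)\}$; this family is closed under union, and $E_\zeta$ denotes its maximum (the union of all its members). $\Lambda_\mathcal{G}(B)=\{\zeta\in\Theta_\mathcal{G}(B):\mathcal{E}_\zeta=\{\emptyset\}\}$ and $\psi\colon\Theta_\mathcal{G}(B)\to\Lambda_\mathcal{G}(B)$, $\psi(\zeta)=(\zeta\setminus E_\zeta)\cup\mu^*(E_\zeta)$. For pairwise disjoint finite sets $F_1,\dots,F_k$, $F_1\odot\cdots\odot F_k=\{\{w_1,\dots,w_k\}: w_j\in F_j\}$. *)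

theory Defs
  imports Main
begin

definition wf_graph :: "nat set \<Rightarrow> 'e set \<Rightarrow> ('e \<Rightarrow> nat) \<Rightarrow> ('e \<Rightarrow> nat) \<Rightarrow> bool" where
  "wf_graph N E s t \<longleftrightarrow> finite N \<and> finite E \<and> (\<forall>e\<in>E. s e \<in> N \<and> t e \<in> N \<and> s e \<noteq> t e)"

definition ucycle :: "'e set \<Rightarrow> ('e \<Rightarrow> nat) \<Rightarrow> ('e \<Rightarrow> nat) \<Rightarrow> 'e list \<Rightarrow> nat list \<Rightarrow> bool" where
  "ucycle F s t es vs \<longleftrightarrow> length es \<ge> 2 \<and> length vs = length es \<and> distinct es \<and> distinct vs
     \<and> set es \<subseteq> F
     \<and> (\<forall>i<length es. {s (es!i), t (es!i)} = {vs!i, vs!((i+1) mod length es)})"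

definition uforest :: "'e set \<Rightarrow> ('e \<Rightarrow> nat) \<Rightarrow> ('e \<Rightarrow> nat) \<Rightarrow> bool" where
  "uforest F s t \<longleftrightarrow> \<not> (\<exists>es vs. ucycle F s t es vs)"

definition uadj :: "'e set \<Rightarrow> ('e \<Rightarrow> nat) \<Rightarrow> ('e \<Rightarrow> nat) \<Rightarrow> (nat \<times> nat) set" where
  "uadj F s t = {(u,v). \<exists>e\<in>F. (s e = u \<and> t e = v) \<or> (s e = v \<and> t e = u)}"

definition components :: "nat set \<Rightarrow> 'e set \<Rightarrow> ('e \<Rightarrow> nat) \<Rightarrow> ('e \<Rightarrow> nat) \<Rightarrow> nat set set" where
  "components N F s t = N // ((uadj F s t)\<^sup>* \<inter> (N \<times> N))"

(* Theta_G(B): spanning forests with |B| components, each a tree rooted at a node of B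
   (the root being the unique node of the component without outgoing edge) *)
definition Theta :: "nat set \<Rightarrow> 'e set \<Rightarrow> ('e \<Rightarrow> nat) \<Rightarrow> ('e \<Rightarrow> nat) \<Rightarrow> nat set \<Rightarrow> 'e set set" where
  "Theta N E s t B = {F. F \<subseteq> E \<and> uforest F s t
      \<and> card (components N F s t) = card B
      \<and> (\<forall>C\<in>components N F s t. \<exists>r\<in>B \<inter> C. \<forall>v\<in>C. (\<not>(\<exists>e\<in>F. s e = v)) \<longleftrightarrow> v = r)}"

definition dcycle :: "'e set \<Rightarrow> ('e \<Rightarrow> nat) \<Rightarrow> ('e \<Rightarrow> nat) \<Rightarrow> 'e list \<Rightarrow> bool" where
  "dcycle E s t es \<longleftrightarrow> es \<noteq> [] \<and> set es \<subseteq> E \<and> distinct (map s es)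
     \<and> (\<forall>i<length es. t (es!i) = s (es!((i+1) mod length es)))"

definition Eminus :: "'e set \<Rightarrow> ('e \<Rightarrow> 'r::ordered_ring) \<Rightarrow> 'e set" where
  "Eminus E \<pi> = {e\<in>E. \<pi> e < 0}"

definition Eplus :: "'e set \<Rightarrow> ('e \<Rightarrow> 'r::ordered_ring) \<Rightarrow> 'e set" where
  "Eplus E \<pi> = {e\<in>E. \<pi> e > 0}"

definition edge_partition ::
  "'e set \<Rightarrow> ('e \<Rightarrow> nat) \<Rightarrow> ('e \<Rightarrow> nat) \<Rightarrow> ('e \<Rightarrow> 'r::ordered_ring) \<Rightarrow> ('e \<Rightarrow> 'e set) \<Rightarrow> bool" where
  "edge_partition E s t \<pi> \<mu> \<longleftrightarrow>
     E = Eplus E \<pi> \<union> Eminus E \<pi> \<and> Eplus E \<pi> \<inter> Eminus E \<pi> = {}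
   \<and> (\<forall>es. dcycle E s t es \<longrightarrow> card (set es \<inter> Eminus E \<pi>) \<le> 1)
   \<and> (\<forall>e\<in>Eminus E \<pi>.
        \<mu> e \<subseteq> Eplus E \<pi>
      \<and> (\<forall>e'\<in>\<mu> e. s e' = s e)
      \<and> (\<forall>e'\<in>\<mu> e. \<forall>es. dcycle E s t es \<and> e' \<in> set es \<longrightarrow> t e \<in> s ` set es)
      \<and> (\<forall>e'\<in>Eminus E \<pi>. e \<noteq> e' \<longrightarrow> \<mu> e \<inter> \<mu> e' = {}))"

definition im_mu :: "'e set \<Rightarrow> ('e \<Rightarrow> 'r::ordered_ring) \<Rightarrow> ('e \<Rightarrow> 'e set) \<Rightarrow> 'e set" where
  "im_mu E \<pi> \<mu> = (\<Union>e\<in>Eminus E \<pi>. \<mu> e)"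

definition mu_star :: "'e set \<Rightarrow> ('e \<Rightarrow> 'r::ordered_ring) \<Rightarrow> ('e \<Rightarrow> 'e set) \<Rightarrow> 'e \<Rightarrow> 'e" where
  "mu_star E \<pi> \<mu> e' = (THE e. e \<in> Eminus E \<pi> \<and> e' \<in> \<mu> e)"

definition Efam :: "nat set \<Rightarrow> 'e set \<Rightarrow> ('e \<Rightarrow> nat) \<Rightarrow> ('e \<Rightarrow> nat) \<Rightarrow> ('e \<Rightarrow> 'r::ordered_ring)
    \<Rightarrow> ('e \<Rightarrow> 'e set) \<Rightarrow> nat set \<Rightarrow> 'e set \<Rightarrow> 'e set set" where
  "Efam N E s t \<pi> \<mu> B \<zeta> = {X. X \<subseteq> \<zeta> \<inter> im_mu E \<pi> \<mu>
       \<and> (\<zeta> - X) \<union> mu_star E \<pi> \<mu> ` X \<in> Theta N E s t B}"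

(* E_\<zeta>: the maximum (union of all members) of the family *)
definition Ezeta :: "nat set \<Rightarrow> 'e set \<Rightarrow> ('e \<Rightarrow> nat) \<Rightarrow> ('e \<Rightarrow> nat) \<Rightarrow> ('e \<Rightarrow> 'r::ordered_ring)
    \<Rightarrow> ('e \<Rightarrow> 'e set) \<Rightarrow> nat set \<Rightarrow> 'e set \<Rightarrow> 'e set" where
  "Ezeta N E s t \<pi> \<mu> B \<zeta> = \<Union> (Efam N E s t \<pi> \<mu> B \<zeta>)"

definition Lambda :: "nat set \<Rightarrow> 'e set \<Rightarrow> ('e \<Rightarrow> nat) \<Rightarrow> ('e \<Rightarrow> nat) \<Rightarrow> ('e \<Rightarrow> 'r::ordered_ring)
    \<Rightarrow> ('e \<Rightarrow> 'e set) \<Rightarrow> nat set \<Rightarrow> 'e set set" where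
  "Lambda N E s t \<pi> \<mu> B = {\<zeta> \<in> Theta N E s t B. Efam N E s t \<pi> \<mu> B \<zeta> = {{}}}"

definition psi :: "nat set \<Rightarrow> 'e set \<Rightarrow> ('e \<Rightarrow> nat) \<Rightarrow> ('e \<Rightarrow> nat) \<Rightarrow> ('e \<Rightarrow> 'r::ordered_ring)
    \<Rightarrow> ('e \<Rightarrow> 'e set) \<Rightarrow> nat set \<Rightarrow> 'e set \<Rightarrow> 'e set" where
  "psi N E s t \<pi> \<mu> B \<zeta> = (\<zeta> - Ezeta N E s t \<pi> \<mu> B \<zeta>) \<union> mu_star E \<pi> \<mu> ` Ezeta N E s t \<pi> \<mu> B \<zeta>"

definition odot :: "'i set \<Rightarrow> ('i \<Rightarrow> 'a set) \<Rightarrow> 'a set set" where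
  "odot I F = {w ` I | w. \<forall>i\<in>I. w i \<in> F i}"

end

(*
  A member of Theta_G(B) is the same thing as an edge set in which every node outside B has
  exactly one outgoing edge, the nodes of B have none, and there is no directed cycle. Trading an
  edge for another with the same source preserves the out-degree condition, and by (iii)(a) this
  is what psi does. So the preimage of zeta is made of the sets obtained from zeta by keeping
  each negative edge e or replacing it by an edge of mu(e); these are exactly the sets on the
  right-hand side.

  Such a replacement xi has no directed cycle: on a cycle take a replaced edge whose source is
  lowest in the forest zeta. By (iii)(b) the cycle passes through the target of the edge it
  replaced, one level lower, and from there the depth keeps decreasing along zeta-edges until
  the next replaced edge, which is lower still. Finally E_xi = xi - zeta: the swappable sets are
  closed under union by (ii), so a larger one would leave a nonempty swappable set for zeta,
  contradicting zeta in Lambda_G(B).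
*)

theory Submission
  imports Defs
begin

section \<open>Rooted forests\<close>

definition out_functional :: "nat set \<Rightarrow> 'e set \<Rightarrow> ('e \<Rightarrow> nat) \<Rightarrow> nat set \<Rightarrow> bool" where
  "out_functional N F s B \<longleftrightarrow> (\<forall>e\<in>F. s e \<notin> B) \<and> (\<forall>v\<in>N - B. \<exists>e\<in>F. s e = v) \<and> inj_on s F"

definition dacyclic :: "'e set \<Rightarrow> ('e \<Rightarrow> nat) \<Rightarrow> ('e \<Rightarrow> nat) \<Rightarrow> bool" where
  "dacyclic F s t \<longleftrightarrow> (\<forall>es. \<not> dcycle F s t es)"

text \<open>The functional description of \<open>\<Theta>\<^sub>\<G>(B)\<close>, see \<open>Theta_iff_rooted_forest\<close>.\<close>
definition rooted_forest :: "nat set \<Rightarrow> 'e set \<Rightarrow> ('e \<Rightarrow> nat) \<Rightarrow> ('e \<Rightarrow> nat) \<Rightarrow> nat set \<Rightarrow> 'e set \<Rightarrow> bool" where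
  "rooted_forest N E s t B F \<longleftrightarrow> F \<subseteq> E \<and> out_functional N F s B \<and> dacyclic F s t"

lemma wf_graphD: "wf_graph N E s t \<Longrightarrow> e \<in> E \<Longrightarrow> s e \<in> N \<and> t e \<in> N \<and> s e \<noteq> t e"
  unfolding wf_graph_def by blast

lemma dcycle_mono: "dcycle F s t es \<Longrightarrow> set es \<subseteq> G \<Longrightarrow> dcycle G s t es"
  unfolding dcycle_def by blast

lemma dcycle_subset: "dcycle F s t es \<Longrightarrow> set es \<subseteq> F"
  unfolding dcycle_def by blast

lemma dacyclic_subset:
  assumes "dacyclic G s t" "F \<subseteq> G"
  shows "dacyclic F s t"
  unfolding dacyclic_def
proof (intro allI notI)
  fix es assume cyc: "dcycle F s t es"
  then have "dcycle G s t es" using dcycle_mono[OF cyc] dcycle_subset[OF cyc] assms(2) by blast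
  then show False using assms(1) unfolding dacyclic_def by blast
qed

lemma funpow_periodic_point:
  assumes "finite V" "V \<noteq> {}" "f ` V \<subseteq> V"
  shows "\<exists>y\<in>V. \<exists>k>0. (f ^^ k) y = y"
proof -
  obtain x where x: "x \<in> V" using assms(2) by blast
  have orbit: "y \<in> V \<Longrightarrow> (f ^^ i) y \<in> V" for y i
    using assms(3) by (induction i) auto
  have "\<not> inj (\<lambda>i. (f ^^ i) x)"
  proof
    assume "inj (\<lambda>i. (f ^^ i) x)"
    then have "infinite (range (\<lambda>i. (f ^^ i) x))" using finite_imageD by blast
    moreover have "range (\<lambda>i. (f ^^ i) x) \<subseteq> V" using orbit x by auto
    ultimately show False using assms(1) finite_subset by blast
  qed
  then obtain i j where "i \<noteq> j" "(f ^^ i) x = (f ^^ j) x"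
    unfolding inj_def by blast
  then obtain i j where ij: "i < j" "(f ^^ i) x = (f ^^ j) x"
    by (metis linorder_neqE_nat)
  define y where "y = (f ^^ i) x"
  have "(f ^^ (j - i)) y = (f ^^ (j - i + i)) x"
    unfolding y_def funpow_add comp_apply ..
  also have "\<dots> = y" using ij by (simp add: y_def)
  finally have "\<exists>k>0. (f ^^ k) y = y"
    using ij(1) by (intro exI[of _ "j - i"]) simp
  moreover have "y \<in> V" using orbit[OF x] y_def by simp
  ultimately show ?thesis by (rule bexI)
qed

lemma funpow_least_period_distinct:
  assumes "0 < k" "(f ^^ k) y = y"
  shows "\<exists>p>0. (f ^^ p) y = y \<and> distinct (map (\<lambda>i. (f ^^ i) y) [0..<p])"
proof -
  define p where "p = (LEAST p. 0 < p \<and> (f ^^ p) y = y)"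
  have "0 < p \<and> (f ^^ p) y = y"
    unfolding p_def by (rule LeastI[of _ k]) (use assms in simp)
  then have p: "0 < p" "(f ^^ p) y = y" by simp_all
  have pmin: "0 < q \<Longrightarrow> q < p \<Longrightarrow> (f ^^ q) y \<noteq> y" for q
    using p_def not_less_Least by blast
  have "distinct (map (\<lambda>i. (f ^^ i) y) [0..<p])"
  proof (rule ccontr)
    assume "\<not> ?thesis"
    then obtain a b where "a < p" "b < p" "a \<noteq> b" "(f ^^ a) y = (f ^^ b) y"
      by (auto simp: distinct_conv_nth)
    then obtain a b where ab: "a < b" "b < p" "(f ^^ a) y = (f ^^ b) y"
      by (metis linorder_neqE_nat)
    have "(f ^^ (p - b + a)) y = (f ^^ (p - b)) ((f ^^ b) y)"
      unfolding funpow_add comp_apply ab(3) ..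
    also have "\<dots> = (f ^^ (p - b + b)) y"
      unfolding funpow_add comp_apply ..
    also have "\<dots> = y" using ab(2) p(2) by simp
    finally have "(f ^^ (p - b + a)) y = y" .
    moreover have "0 < p - b + a" "p - b + a < p" using ab by linarith+
    ultimately show False using pmin by metis
  qed
  then show ?thesis using p by (intro exI[of _ p]) simp
qed

lemma dcycle_if_successor_closed:
  assumes "finite V" "V \<noteq> {}" "\<forall>v\<in>V. \<exists>e\<in>F. s e = v \<and> t e \<in> V"
  shows "\<exists>es. dcycle F s t es"
proof -
  obtain g where g: "\<And>v. v \<in> V \<Longrightarrow> g v \<in> F \<and> s (g v) = v \<and> t (g v) \<in> V"
    using assms(3) by metis
  define f where "f v = t (g v)" for v
  have "f ` V \<subseteq> V" using g f_def by auto
  then obtain y k0 where y: "y \<in> V" and k0: "0 < k0" "(f ^^ k0) y = y"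
    using funpow_periodic_point[OF assms(1,2)] by metis
  obtain k where k: "0 < k" "(f ^^ k) y = y"
    and dist: "distinct (map (\<lambda>i. (f ^^ i) y) [0..<k])"
    using funpow_least_period_distinct[OF k0] by metis
  have orbit: "(f ^^ i) y \<in> V" for i using y \<open>f ` V \<subseteq> V\<close> by (induction i) auto
  define es where "es = map (\<lambda>i. g ((f ^^ i) y)) [0..<k]"
  have s_es: "map s es = map (\<lambda>i. (f ^^ i) y) [0..<k]"
    unfolding es_def using g[OF orbit] by simp
  have "t (es ! i) = s (es ! ((i + 1) mod k))" if "i < k" for i
  proof -
    have "t (es ! i) = (f ^^ Suc i) y" using that by (simp add: es_def f_def)
    also have "\<dots> = (f ^^ ((i + 1) mod k)) y"
      using that k by (cases "i + 1 = k") simp_all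
    also have "\<dots> = s (es ! ((i + 1) mod k))"
      using k(1) g[OF orbit] by (simp add: es_def)
    finally show ?thesis .
  qed
  moreover have "set es \<subseteq> F" unfolding es_def using g[OF orbit] by auto
  ultimately have "dcycle F s t es"
    unfolding dcycle_def using k(1) dist
    by (simp only: s_es length_map length_upt) (simp add: es_def)
  then show ?thesis ..
qed

definition out_edge :: "'e set \<Rightarrow> ('e \<Rightarrow> nat) \<Rightarrow> nat \<Rightarrow> 'e" where
  "out_edge F s v = (SOME e. e \<in> F \<and> s e = v)"

definition parent :: "'e set \<Rightarrow> ('e \<Rightarrow> nat) \<Rightarrow> ('e \<Rightarrow> nat) \<Rightarrow> nat \<Rightarrow> nat" where
  "parent F s t v = t (out_edge F s v)"

definition depth :: "'e set \<Rightarrow> ('e \<Rightarrow> nat) \<Rightarrow> ('e \<Rightarrow> nat) \<Rightarrow> nat set \<Rightarrow> nat \<Rightarrow> nat" where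
  "depth F s t B v = (LEAST k. (parent F s t ^^ k) v \<in> B)"

definition root :: "'e set \<Rightarrow> ('e \<Rightarrow> nat) \<Rightarrow> ('e \<Rightarrow> nat) \<Rightarrow> nat set \<Rightarrow> nat \<Rightarrow> nat" where
  "root F s t B v = (parent F s t ^^ depth F s t B v) v"

lemma out_edge_in: "\<exists>e\<in>F. s e = v \<Longrightarrow> out_edge F s v \<in> F \<and> s (out_edge F s v) = v"
  unfolding out_edge_def by (rule someI_ex) blast

lemma out_edge_eq: "inj_on s F \<Longrightarrow> e \<in> F \<Longrightarrow> out_edge F s (s e) = e"
  unfolding out_edge_def by (rule some_equality) (auto dest: inj_onD)

lemma parent_eq: "inj_on s F \<Longrightarrow> e \<in> F \<Longrightarrow> parent F s t (s e) = t e"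
  unfolding parent_def by (simp add: out_edge_eq)

lemma rooted_forest_out_edge:
  assumes "wf_graph N E s t" "rooted_forest N E s t B F" "v \<in> N - B"
  shows "out_edge F s v \<in> F" "s (out_edge F s v) = v" "parent F s t v \<in> N"
proof -
  have "\<exists>e\<in>F. s e = v" using assms(2,3) unfolding rooted_forest_def out_functional_def by blast
  from out_edge_in[OF this]
  show e: "out_edge F s v \<in> F" "s (out_edge F s v) = v" by simp_all
  have "F \<subseteq> E" using assms(2) unfolding rooted_forest_def by blast
  then show "parent F s t v \<in> N"
    unfolding parent_def using wf_graphD[OF assms(1)] e(1) by auto
qed

text \<open>Following parents from a node outside \<open>B\<close> never revisits a node (the forest has no
  directed cycle) and never gets stuck, so within the finite node set it must enter \<open>B\<close>.\<close>
lemma rooted_forest_reaches_B: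
  assumes wf: "wf_graph N E s t" and F: "rooted_forest N E s t B F" and v: "v \<in> N"
  shows "\<exists>k. (parent F s t ^^ k) v \<in> B"
proof (rule ccontr)
  assume nv: "\<not> ?thesis"
  define V where "V = {v \<in> N. \<forall>k. (parent F s t ^^ k) v \<notin> B}"
  have "\<exists>e\<in>F. s e = u \<and> t e \<in> V" if u: "u \<in> V" for u
  proof -
    have "u \<in> N - B" using u unfolding V_def by (auto dest: spec[of _ 0])
    note out = rooted_forest_out_edge[OF wf F this]
    have "(parent F s t ^^ k) (parent F s t u) \<notin> B" for k
    proof -
      have "(parent F s t ^^ Suc k) u \<notin> B" using u unfolding V_def by blast
      then show ?thesis by (simp only: funpow_Suc_right comp_apply) simp
    qed
    then have "t (out_edge F s u) \<in> V" using out(3) unfolding V_def parent_def by simp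
    then show ?thesis using out(1,2) by blast
  qed
  moreover have "finite V" using wf unfolding wf_graph_def V_def by auto
  moreover have "V \<noteq> {}" using nv v V_def by auto
  ultimately obtain es where "dcycle F s t es" using dcycle_if_successor_closed[of V F s t] by blast
  then show False using F unfolding rooted_forest_def dacyclic_def by blast
qed

lemma depth_B: "v \<in> B \<Longrightarrow> depth F s t B v = 0"
  unfolding depth_def by (rule Least_equality) auto

lemma root_B: "v \<in> B \<Longrightarrow> root F s t B v = v"
  unfolding root_def by (simp add: depth_B)

lemma depth_parent:
  assumes wf: "wf_graph N E s t" and F: "rooted_forest N E s t B F" and v: "v \<in> N - B"
  shows "depth F s t B v = Suc (depth F s t B (parent F s t v))"
    and "root F s t B v = root F s t B (parent F s t v)"
proof -
  let ?p = "parent F s t"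
  have shift: "(?p ^^ Suc j) v = (?p ^^ j) (?p v)" for j
    by (simp only: funpow_Suc_right comp_apply)
  obtain k where k: "(?p ^^ k) (?p v) \<in> B"
    using rooted_forest_reaches_B[OF wf F rooted_forest_out_edge(3)[OF wf F v]] by blast
  define n where "n = depth F s t B (?p v)"
  have n: "(?p ^^ n) (?p v) \<in> B"
    unfolding n_def depth_def by (rule LeastI[of _ k]) (rule k)
  have nmin: "\<And>j. (?p ^^ j) (?p v) \<in> B \<Longrightarrow> n \<le> j"
    unfolding n_def depth_def by (rule Least_le)
  have "depth F s t B v = Suc n"
    unfolding depth_def
  proof (rule Least_equality)
    show "(?p ^^ Suc n) v \<in> B" using n shift by simp
  next
    fix y assume y: "(?p ^^ y) v \<in> B"
    show "Suc n \<le> y"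
    proof (cases y)
      case 0 then show ?thesis using y v by simp
    next
      case (Suc j) then show ?thesis using y shift nmin by fastforce
    qed
  qed
  then show "depth F s t B v = Suc (depth F s t B (?p v))"
    and "root F s t B v = root F s t B (?p v)"
    unfolding root_def n_def using shift by simp_all
qed

lemma depth_edge:
  assumes wf: "wf_graph N E s t" and F: "rooted_forest N E s t B F" and e: "e \<in> F"
  shows "depth F s t B (s e) = Suc (depth F s t B (t e))"
    and "root F s t B (s e) = root F s t B (t e)"
proof -
  have "F \<subseteq> E" and out: "out_functional N F s B" using F unfolding rooted_forest_def by blast+
  then have "s e \<in> N - B" using wf_graphD[OF wf] e unfolding out_functional_def by blast
  moreover have "parent F s t (s e) = t e"
    using parent_eq out e unfolding out_functional_def by metis
  ultimately show "depth F s t B (s e) = Suc (depth F s t B (t e))"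
    and "root F s t B (s e) = root F s t B (t e)"
    using depth_parent[OF wf F] by simp_all
qed

lemma root_connected:
  assumes wf: "wf_graph N E s t" and F: "rooted_forest N E s t B F" and v: "v \<in> N"
  shows "root F s t B v \<in> B \<and> (v, root F s t B v) \<in> (uadj F s t)\<^sup>*"
  using v
proof (induction "depth F s t B v" arbitrary: v)
  case 0
  obtain k where "(parent F s t ^^ k) v \<in> B" using rooted_forest_reaches_B[OF wf F 0(2)] by blast
  then have "(parent F s t ^^ depth F s t B v) v \<in> B" unfolding depth_def by (rule LeastI)
  then have "v \<in> B" using 0(1) by (metis funpow_0)
  then show ?case by (simp add: root_B)
next
  case (Suc n)
  have "v \<in> N - B" using Suc(2,3) depth_B[of v B F s t] by auto
  note out = rooted_forest_out_edge[OF wf F this] and step = depth_parent[OF wf F this]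
  have "root F s t B (parent F s t v) \<in> B
      \<and> (parent F s t v, root F s t B (parent F s t v)) \<in> (uadj F s t)\<^sup>*"
    using Suc(1)[OF _ out(3)] Suc(2) step(1) by simp
  moreover have "(v, parent F s t v) \<in> uadj F s t"
    unfolding uadj_def parent_def using out(1,2) by blast
  ultimately show ?case using step(2) by (simp add: converse_rtrancl_into_rtrancl)
qed

lemma root_eq_if_connected:
  assumes wf: "wf_graph N E s t" and F: "rooted_forest N E s t B F"
    and xy: "(x, y) \<in> (uadj F s t)\<^sup>*"
  shows "root F s t B x = root F s t B y"
  using xy
proof (induction rule: rtrancl_induct)
  case (step y z)
  then obtain e where "e \<in> F" "(s e = y \<and> t e = z) \<or> (s e = z \<and> t e = y)"
    unfolding uadj_def by blast
  then show ?case using depth_edge(2)[OF wf F] step.IH by metis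
qed simp

section \<open>\<open>\<Theta>\<^sub>\<G>(B)\<close> as the set of rooted forests\<close>

lemma dcycle_ucycle:
  assumes wf: "wf_graph N E s t" and FE: "F \<subseteq> E" and d: "dcycle F s t es"
  shows "ucycle F s t es (map s es)"
proof -
  have ne: "es \<noteq> []" and sub: "set es \<subseteq> F" and dist: "distinct (map s es)"
    and nx: "\<forall>i<length es. t (es ! i) = s (es ! ((i + 1) mod length es))"
    using d unfolding dcycle_def by auto
  have "length es \<ge> 2"
  proof (rule ccontr)
    assume "\<not> length es \<ge> 2"
    moreover have "length es \<noteq> 0" using ne by simp
    ultimately have l: "length es = 1" by linarith
    then have "t (es ! 0) = s (es ! 0)" using nx by auto
    moreover have "es ! 0 \<in> E" using sub FE l by (metis in_mono less_one nth_mem)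
    ultimately show False using wf_graphD[OF wf] by metis
  qed
  moreover have "distinct es" using dist distinct_map by blast
  moreover have "\<forall>i<length es. {s (es!i), t (es!i)} = {map s es ! i, map s es ! ((i+1) mod length es)}"
    using nx ne by auto
  ultimately show ?thesis unfolding ucycle_def using sub dist by auto
qed

text \<open>The edges of an undirected cycle have distinct sources, so every node of the cycle is the
  source of one of them and the node set is closed under following these edges.\<close>
lemma rooted_forest_uforest:
  assumes F: "rooted_forest N E s t B F"
  shows "uforest F s t"
  unfolding uforest_def
proof
  assume "\<exists>es vs. ucycle F s t es vs"
  then obtain es vs where "ucycle F s t es vs" by blast
  then have len: "length es \<ge> 2" "length vs = length es" and de: "distinct es" and dv: "distinct vs"
    and sub: "set es \<subseteq> F"
    and adj: "\<forall>i<length es. {s (es!i), t (es!i)} = {vs!i, vs!((i+1) mod length es)}"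
    unfolding ucycle_def by auto
  have st: "s e \<in> set vs \<and> t e \<in> set vs" if "e \<in> set es" for e
  proof -
    obtain i where i: "i < length es" "e = es ! i" using \<open>e \<in> set es\<close> by (metis in_set_conv_nth)
    have "0 < length es" using len by linarith
    then have "(i + 1) mod length es < length vs" using len by simp
    then have "{vs!i, vs!((i+1) mod length es)} \<subseteq> set vs" using i len by simp
    moreover have "{s e, t e} = {vs!i, vs!((i+1) mod length es)}" using adj i by blast
    ultimately show ?thesis by blast
  qed
  have "inj_on s (set es)"
    using F sub unfolding rooted_forest_def out_functional_def by (meson inj_on_subset)
  then have "card (s ` set es) = card (set vs)"
    using card_image distinct_card[OF de] distinct_card[OF dv] len by metis
  then have eq: "s ` set es = set vs" using st by (intro card_subset_eq) auto
  have "\<forall>v\<in>set vs. \<exists>e\<in>F. s e = v \<and> t e \<in> set vs"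
    using st sub unfolding eq[symmetric] by blast
  moreover have "set vs \<noteq> {}" using len by auto
  ultimately obtain es' where "dcycle F s t es'"
    using dcycle_if_successor_closed[of "set vs" F s t] by blast
  then show False using F unfolding rooted_forest_def dacyclic_def by blast
qed

lemma equiv_connected: "equiv N ((uadj F s t)\<^sup>* \<inter> N \<times> N)"
proof -
  have "sym (uadj F s t)" unfolding uadj_def sym_def by blast
  then have "sym ((uadj F s t)\<^sup>* \<inter> N \<times> N)"
    by (intro sym_Int sym_rtrancl) (auto simp: sym_def)
  moreover have "trans ((uadj F s t)\<^sup>* \<inter> N \<times> N)"
    by (intro trans_Int trans_rtrancl) (auto simp: trans_def)
  moreover have "refl_on N ((uadj F s t)\<^sup>* \<inter> N \<times> N)" unfolding refl_on_def by auto
  ultimately show ?thesis unfolding equiv_def by blast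
qed

text \<open>The components of a rooted forest are the classes of the roots, one for each node of \<open>B\<close>.\<close>
lemma rooted_forest_Theta:
  assumes wf: "wf_graph N E s t" and BN: "B \<subseteq> N" and F: "rooted_forest N E s t B F"
  shows "F \<in> Theta N E s t B"
proof -
  let ?R = "(uadj F s t)\<^sup>* \<inter> N \<times> N"
  let ?root = "root F s t B"
  have eqv: "equiv N ?R" by (rule equiv_connected)
  have comp: "components N F s t = N // ?R" unfolding components_def ..
  have root: "?root v \<in> B" "(v, ?root v) \<in> ?R" if "v \<in> N" for v
    using root_connected[OF wf F that] BN that by auto
  have root_eq: "?root x = ?root y" if "(x, y) \<in> ?R" for x y
    using root_eq_if_connected[OF wf F] that by blast
  have out: "out_functional N F s B" using F unfolding rooted_forest_def by blast
  have cls: "?R``{v} = ?R``{?root v}" if "v \<in> N" for v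
    using root(2)[OF that] equiv_class_eq_iff[OF eqv] by blast
  have img: "N // ?R = (\<lambda>b. ?R``{b}) ` B"
  proof
    show "N // ?R \<subseteq> (\<lambda>b. ?R``{b}) ` B"
      using cls root(1) by (auto elim!: quotientE)
    show "(\<lambda>b. ?R``{b}) ` B \<subseteq> N // ?R"
      using BN by (auto intro: quotientI)
  qed
  have "inj_on (\<lambda>b. ?R``{b}) B"
  proof (rule inj_onI)
    fix b1 b2 assume b: "b1 \<in> B" "b2 \<in> B" "?R``{b1} = ?R``{b2}"
    then have "(b1, b2) \<in> ?R" using eq_equiv_class_iff[OF eqv] BN by blast
    then show "b1 = b2" using root_eq root_B b(1,2) by metis
  qed
  then have "card (components N F s t) = card B" using comp img card_image by metis
  moreover have "\<exists>r\<in>B \<inter> C. \<forall>v\<in>C. (\<not>(\<exists>e\<in>F. s e = v)) \<longleftrightarrow> v = r"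
    if "C \<in> components N F s t" for C
  proof -
    have "C \<in> N // ?R" using that comp by simp
    then obtain v where v: "v \<in> N" "C = ?R``{v}" by (rule quotientE)
    have "(\<not>(\<exists>e\<in>F. s e = u)) \<longleftrightarrow> u = ?root v" if "u \<in> C" for u
    proof -
      have uv: "(v, u) \<in> ?R" using that v by simp
      then have "u \<in> N" "?root u = ?root v" using root_eq by auto
      then show ?thesis using out root(1)[OF v(1)] root_B[of u B F s t]
        unfolding out_functional_def by auto
    qed
    moreover have "?root v \<in> B \<inter> C" using root v by blast
    ultimately show ?thesis by blast
  qed
  ultimately show ?thesis
    using F rooted_forest_uforest[OF F] unfolding Theta_def rooted_forest_def by blast
qed

lemma ThetaD:
  assumes "F \<in> Theta N E s t B"
  shows "F \<subseteq> E" "uforest F s t" "card (components N F s t) = card B"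
    "\<forall>C\<in>components N F s t. \<exists>r\<in>B \<inter> C. \<forall>v\<in>C. (\<not>(\<exists>e\<in>F. s e = v)) \<longleftrightarrow> v = r"
  using assms unfolding Theta_def mem_Collect_eq by blast+

lemma Theta_component_root:
  assumes "F \<in> Theta N E s t B" "C \<in> components N F s t"
  obtains r where "r \<in> B" "r \<in> C" "\<And>v. v \<in> C \<Longrightarrow> (\<not> (\<exists>e\<in>F. s e = v)) \<longleftrightarrow> v = r"
  using bspec[OF ThetaD(4)[OF assms(1)] assms(2)] by blast

lemma Theta_dacyclic:
  assumes wf: "wf_graph N E s t" and F: "F \<in> Theta N E s t B"
  shows "dacyclic F s t"
  unfolding dacyclic_def
proof (intro allI notI)
  fix es assume "dcycle F s t es"
  then have "ucycle F s t es (map s es)" using dcycle_ucycle[OF wf ThetaD(1)[OF F]] by blast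
  then show False using ThetaD(2)[OF F] unfolding uforest_def by blast
qed

text \<open>Sending each component to its root is injective, and there are as many components as
  nodes in \<open>B\<close>; so every node of \<open>B\<close> is a root.\<close>
lemma Theta_B_no_out_edge:
  assumes wf: "wf_graph N E s t" and BN: "B \<subseteq> N" and F: "F \<in> Theta N E s t B" and b: "b \<in> B"
  shows "\<not> (\<exists>e\<in>F. s e = b)"
proof -
  let ?R = "(uadj F s t)\<^sup>* \<inter> N \<times> N"
  let ?C = "components N F s t"
  let ?is_root = "\<lambda>C r. r \<in> B \<inter> C \<and> (\<forall>v\<in>C. (\<not>(\<exists>e\<in>F. s e = v)) \<longleftrightarrow> v = r)"
  define \<rho> where "\<rho> C = (SOME r. ?is_root C r)" for C
  have \<rho>: "?is_root C (\<rho> C)" if "C \<in> ?C" for C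
  proof -
    have "\<exists>r. ?is_root C r" using bspec[OF ThetaD(4)[OF F] that] by blast
    then show ?thesis unfolding \<rho>_def by (rule someI_ex)
  qed
  have inj: "inj_on \<rho> ?C"
  proof (rule inj_onI)
    fix C1 C2 assume C: "C1 \<in> ?C" "C2 \<in> ?C" "\<rho> C1 = \<rho> C2"
    have "\<rho> C1 \<in> C1" "\<rho> C2 \<in> C2" using \<rho>[OF C(1)] \<rho>[OF C(2)] by blast+
    then have "C1 \<inter> C2 \<noteq> {}" using C(3) by auto
    have "C1 \<in> N // ?R" "C2 \<in> N // ?R" using C(1,2) unfolding components_def .
    then have "C1 = C2 \<or> C1 \<inter> C2 = {}" by (rule quotient_disj[OF equiv_connected])
    with \<open>C1 \<inter> C2 \<noteq> {}\<close> show "C1 = C2" by blast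
  qed
  have sub: "\<rho> ` ?C \<subseteq> B" using \<rho> by auto
  have "finite N" using wf unfolding wf_graph_def by blast
  then have "finite B" using BN by (rule finite_subset[rotated])
  moreover have "card (\<rho> ` ?C) = card B" using card_image[OF inj] ThetaD(3)[OF F] by simp
  ultimately have "\<rho> ` ?C = B" by (rule card_subset_eq[OF _ sub])
  then obtain C where C: "C \<in> ?C" "b = \<rho> C" using b by blast
  then show ?thesis using \<rho>[OF C(1)] by blast
qed

lemma Theta_out_edge:
  assumes F: "F \<in> Theta N E s t B" and v: "v \<in> N - B"
  shows "\<exists>e\<in>F. s e = v"
proof -
  let ?R = "(uadj F s t)\<^sup>* \<inter> N \<times> N"
  have C: "?R``{v} \<in> components N F s t"
    using v unfolding components_def by (simp add: quotientI)
  obtain r where "r \<in> B" "r \<in> ?R``{v}"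
    and root: "\<And>u. u \<in> ?R``{v} \<Longrightarrow> (\<not>(\<exists>e\<in>F. s e = u)) \<longleftrightarrow> u = r"
    using Theta_component_root[OF F C] by blast
  then have "v \<noteq> r" using v by blast
  then show ?thesis using root[of v] v by simp
qed

lemma Theta_B_connected_eq:
  assumes wf: "wf_graph N E s t" and BN: "B \<subseteq> N" and F: "F \<in> Theta N E s t B"
    and b: "b1 \<in> B" "b2 \<in> B" and conn: "(b1, b2) \<in> (uadj F s t)\<^sup>*"
  shows "b1 = b2"
proof -
  let ?R = "(uadj F s t)\<^sup>* \<inter> N \<times> N"
  have C: "?R``{b1} \<in> components N F s t"
    using b BN unfolding components_def by (auto intro: quotientI)
  obtain r where r: "\<And>v. v \<in> ?R``{b1} \<Longrightarrow> (\<not>(\<exists>e\<in>F. s e = v)) \<longleftrightarrow> v = r"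
    using Theta_component_root[OF F C] by blast
  moreover have "b1 \<in> ?R``{b1}" "b2 \<in> ?R``{b1}" using conn b BN by auto
  moreover have "\<not>(\<exists>e\<in>F. s e = b1)" "\<not>(\<exists>e\<in>F. s e = b2)"
    using Theta_B_no_out_edge[OF wf BN F] b by simp_all
  ultimately show ?thesis by simp
qed

definition upath :: "'e set \<Rightarrow> ('e \<Rightarrow> nat) \<Rightarrow> ('e \<Rightarrow> nat) \<Rightarrow> nat list \<Rightarrow> 'e list \<Rightarrow> bool" where
  "upath G s t vs es \<longleftrightarrow> distinct vs \<and> length vs = Suc (length es) \<and> set es \<subseteq> G
     \<and> (\<forall>i<length es. {s (es!i), t (es!i)} = {vs!i, vs!Suc i})"

lemma upath_if_connected:
  assumes "(x, y) \<in> (uadj G s t)\<^sup>*"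
  shows "\<exists>vs es. upath G s t vs es \<and> hd vs = x \<and> last vs = y"
  using assms
proof (induction rule: rtrancl_induct)
  case base
  have "upath G s t [x] []" unfolding upath_def by simp
  then show ?case by fastforce
next
  case (step y z)
  obtain vs es where p: "upath G s t vs es" "hd vs = x" "last vs = y" using step.IH by blast
  obtain e where e: "e \<in> G" "{s e, t e} = {y, z}"
    using step.hyps(2) unfolding uadj_def by blast
  have dv: "distinct vs" and lv: "length vs = Suc (length es)" and se: "set es \<subseteq> G"
    and ad: "\<forall>i<length es. {s (es!i), t (es!i)} = {vs!i, vs!Suc i}"
    using p(1) unfolding upath_def by auto
  show ?case
  proof (cases "z \<in> set vs")
    case True
    then obtain j where j: "j < length vs" "vs ! j = z" by (metis in_set_conv_nth)
    have "upath G s t (take (Suc j) vs) (take j es)"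
      unfolding upath_def using dv lv se ad j by (auto dest: in_set_takeD)
    moreover have "hd (take (Suc j) vs) = x" using p(2) j by (cases vs) auto
    moreover have "last (take (Suc j) vs) = z"
      using j by (simp add: take_Suc_conv_app_nth)
    ultimately show ?thesis by blast
  next
    case False
    have ne: "vs \<noteq> []" using lv by auto
    have "vs ! length es = y" using p(3) lv ne by (simp add: last_conv_nth)
    then have "upath G s t (vs @ [z]) (es @ [e])"
      unfolding upath_def using dv lv se ad e False
      by (auto simp: nth_append less_Suc_eq)
    moreover have "hd (vs @ [z]) = x" using p(2) ne by simp
    ultimately show ?thesis by fastforce
  qed
qed

lemma upath_distinct_edges:
  assumes "upath G s t vs es"
  shows "distinct es"
proof -
  have dv: "distinct vs" and lv: "length vs = Suc (length es)"
    and ad: "\<forall>i<length es. {s (es!i), t (es!i)} = {vs!i, vs!Suc i}"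
    using assms unfolding upath_def by auto
  show ?thesis
    unfolding distinct_conv_nth
  proof (intro allI impI)
    fix i j assume ij: "i < length es" "j < length es" "i \<noteq> j"
    show "es ! i \<noteq> es ! j"
    proof
      assume "es ! i = es ! j"
      then have "{vs!i, vs!Suc i} = {vs!j, vs!Suc j}" using ad ij by metis
      moreover have "vs!i \<noteq> vs!j" using dv ij lv by (simp add: nth_eq_iff_index_eq)
      ultimately have "vs!i = vs!Suc j" "vs!j = vs!Suc i" by (metis doubleton_eq_iff)+
      then have "i = Suc j" "j = Suc i" using dv ij lv by (simp_all add: nth_eq_iff_index_eq)
      then show False by simp
    qed
  qed
qed

text \<open>A path joining the ends of \<open>e\<close> without using \<open>e\<close> would close an undirected cycle.\<close>
lemma uforest_edge_ends_disconnected: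
  assumes forest: "uforest F s t" and e: "e \<in> F" "s e \<noteq> t e"
  shows "(t e, s e) \<notin> (uadj (F - {e}) s t)\<^sup>*"
proof
  assume "(t e, s e) \<in> (uadj (F - {e}) s t)\<^sup>*"
  then obtain vs es where p: "upath (F - {e}) s t vs es" "hd vs = t e" "last vs = s e"
    using upath_if_connected by blast
  have dv: "distinct vs" and lv: "length vs = Suc (length es)" and se: "set es \<subseteq> F - {e}"
    and ad: "\<forall>i<length es. {s (es!i), t (es!i)} = {vs!i, vs!Suc i}"
    using p(1) unfolding upath_def by auto
  have vne: "vs \<noteq> []" using lv by auto
  have first: "vs ! 0 = t e" using p(2) hd_conv_nth[OF vne] by simp
  have last: "vs ! length es = s e" using p(3) last_conv_nth[OF vne] lv by simp
  have "length es \<ge> 1" using first last e(2) by (cases es) auto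
  have "ucycle F s t (es @ [e]) vs"
    unfolding ucycle_def
  proof (intro conjI)
    show "length (es @ [e]) \<ge> 2" using \<open>length es \<ge> 1\<close> by simp
    show "distinct (es @ [e])" using upath_distinct_edges[OF p(1)] se by auto
    show "\<forall>i<length (es @ [e]). {s ((es @ [e]) ! i), t ((es @ [e]) ! i)} =
          {vs ! i, vs ! ((i + 1) mod length (es @ [e]))}"
    proof (intro allI impI)
      fix i assume "i < length (es @ [e])"
      then consider "i < length es" | "i = length es" by fastforce
      then show "{s ((es @ [e]) ! i), t ((es @ [e]) ! i)} = {vs ! i, vs ! ((i + 1) mod length (es @ [e]))}"
        by cases (use ad first last in \<open>auto simp: nth_append\<close>)
    qed
  qed (use lv dv se e(1) in auto)
  then show False using forest unfolding uforest_def by blast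
qed

lemma out_functional_subset:
  assumes no_B: "\<forall>e\<in>F. s e \<notin> B" and out: "\<forall>v\<in>N - B. \<exists>e\<in>F. s e = v" and e: "e \<in> F"
  shows "\<exists>F0\<subseteq>F. e \<in> F0 \<and> out_functional N F0 s B"
proof -
  define F0 where "F0 = insert e (out_edge F s ` (N - B - {s e}))"
  have out_edge: "out_edge F s v \<in> F \<and> s (out_edge F s v) = v" if "v \<in> N - B" for v
    using out_edge_in[of F s v] out that by blast
  have "F0 \<subseteq> F" unfolding F0_def using e out_edge by blast
  moreover have "inj_on s F0"
    unfolding F0_def using out_edge by (auto simp: inj_on_def)
  moreover have "\<exists>e'\<in>F0. s e' = v" if "v \<in> N - B" for v
    using out_edge that unfolding F0_def by (cases "v = s e") auto
  ultimately show ?thesis using no_B unfolding out_functional_def F0_def by blast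
qed

lemma uadj_rtrancl_sym: "(x, y) \<in> (uadj F s t)\<^sup>* \<Longrightarrow> (y, x) \<in> (uadj F s t)\<^sup>*"
proof -
  have "sym (uadj F s t)" unfolding uadj_def sym_def by blast
  then have "sym ((uadj F s t)\<^sup>*)" by (rule sym_rtrancl)
  then show "(x, y) \<in> (uadj F s t)\<^sup>* \<Longrightarrow> (y, x) \<in> (uadj F s t)\<^sup>*" unfolding sym_def by blast
qed

lemma uadj_mono: "F \<subseteq> G \<Longrightarrow> (uadj F s t)\<^sup>* \<subseteq> (uadj G s t)\<^sup>*"
  unfolding uadj_def by (rule rtrancl_mono) blast

text \<open>If \<open>e\<^sub>1 \<noteq> e\<^sub>2\<close> leave the same node, thin \<open>F\<close> to a rooted forest containing \<open>e\<^sub>1\<close> but not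
  \<open>e\<^sub>2\<close>. In it both ends of \<open>e\<^sub>2\<close> reach roots, which coincide because they are connected in
  \<open>F\<close>; so the ends of \<open>e\<^sub>2\<close> are joined without \<open>e\<^sub>2\<close>.\<close>
lemma Theta_inj_on_source:
  assumes wf: "wf_graph N E s t" and BN: "B \<subseteq> N" and F: "F \<in> Theta N E s t B"
  shows "inj_on s F"
proof (rule inj_onI, rule ccontr)
  fix e1 e2 assume e: "e1 \<in> F" "e2 \<in> F" "s e1 = s e2" and ne: "e1 \<noteq> e2"
  have FE: "F \<subseteq> E" and forest: "uforest F s t" using ThetaD[OF F] by blast+
  have "\<forall>e\<in>F. s e \<notin> B" using Theta_B_no_out_edge[OF wf BN F] by blast
  moreover have "\<forall>v\<in>N - B. \<exists>e\<in>F. s e = v" using Theta_out_edge[OF F] by blast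
  ultimately have "\<exists>F0\<subseteq>F. e1 \<in> F0 \<and> out_functional N F0 s B"
    by (rule out_functional_subset[OF _ _ e(1)])
  then obtain F0 where F0: "F0 \<subseteq> F" "e1 \<in> F0" "out_functional N F0 s B" by blast
  have "e2 \<notin> F0"
  proof
    assume "e2 \<in> F0"
    moreover have "inj_on s F0" using F0(3) unfolding out_functional_def by blast
    ultimately have "e1 = e2" using F0(2) e(3) inj_onD[of s F0 e1 e2] by simp
    then show False using ne by contradiction
  qed
  have rf: "rooted_forest N E s t B F0"
    unfolding rooted_forest_def using F0 FE dacyclic_subset[OF Theta_dacyclic[OF wf F] F0(1)] by blast
  let ?root = "root F0 s t B"
  have ends: "s e2 \<in> N" "t e2 \<in> N" "s e2 \<noteq> t e2" using wf_graphD[OF wf] FE e(2) by blast+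
  have rs: "?root (s e2) \<in> B" "(s e2, ?root (s e2)) \<in> (uadj F0 s t)\<^sup>*"
    using root_connected[OF wf rf ends(1)] by blast+
  have rt: "?root (t e2) \<in> B" "(t e2, ?root (t e2)) \<in> (uadj F0 s t)\<^sup>*"
    using root_connected[OF wf rf ends(2)] by blast+
  have "(?root (s e2), s e2) \<in> (uadj F s t)\<^sup>*"
    using uadj_mono[OF F0(1)] uadj_rtrancl_sym[OF rs(2)] by blast
  also have "(s e2, t e2) \<in> uadj F s t" unfolding uadj_def using e(2) by blast
  also have "(t e2, ?root (t e2)) \<in> (uadj F s t)\<^sup>*" using uadj_mono[OF F0(1)] rt(2) by blast
  finally have "?root (s e2) = ?root (t e2)" by (rule Theta_B_connected_eq[OF wf BN F rs(1) rt(1)])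
  then have "(?root (t e2), s e2) \<in> (uadj F0 s t)\<^sup>*" using uadj_rtrancl_sym[OF rs(2)] by simp
  with rt(2) have "(t e2, s e2) \<in> (uadj F0 s t)\<^sup>*" by (rule rtrancl_trans)
  moreover have "F0 \<subseteq> F - {e2}" using F0(1) \<open>e2 \<notin> F0\<close> by blast
  ultimately show False
    using uadj_mono uforest_edge_ends_disconnected[OF forest e(2) ends(3)] by blast
qed

lemma Theta_iff_rooted_forest:
  assumes wf: "wf_graph N E s t" and BN: "B \<subseteq> N"
  shows "F \<in> Theta N E s t B \<longleftrightarrow> rooted_forest N E s t B F"
proof
  assume F: "F \<in> Theta N E s t B"
  then show "rooted_forest N E s t B F"
    unfolding rooted_forest_def out_functional_def
    using Theta_dacyclic[OF wf F] Theta_B_no_out_edge[OF wf BN F] Theta_out_edge[OF F]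
      Theta_inj_on_source[OF wf BN F] ThetaD(1)[OF F]
    by blast
qed (rule rooted_forest_Theta[OF wf BN])

section \<open>Swapping edges\<close>

lemma edge_partitionD:
  assumes "edge_partition E s t \<pi> \<mu>"
  shows "E = Eplus E \<pi> \<union> Eminus E \<pi>" "Eplus E \<pi> \<inter> Eminus E \<pi> = {}"
    and "dcycle E s t es \<Longrightarrow> card (set es \<inter> Eminus E \<pi>) \<le> 1"
    and "e \<in> Eminus E \<pi> \<Longrightarrow> \<mu> e \<subseteq> Eplus E \<pi>"
    and "e \<in> Eminus E \<pi> \<Longrightarrow> e' \<in> \<mu> e \<Longrightarrow> s e' = s e"
    and "e \<in> Eminus E \<pi> \<Longrightarrow> e' \<in> \<mu> e \<Longrightarrow> dcycle E s t es \<Longrightarrow> e' \<in> set es \<Longrightarrow> t e \<in> s ` set es"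
    and "e \<in> Eminus E \<pi> \<Longrightarrow> e' \<in> Eminus E \<pi> \<Longrightarrow> e \<noteq> e' \<Longrightarrow> \<mu> e \<inter> \<mu> e' = {}"
  using assms unfolding edge_partition_def by blast+

lemma Eminus_subset: "Eminus E \<pi> \<subseteq> E"
  unfolding Eminus_def by blast

lemma Eplus_subset: "Eplus E \<pi> \<subseteq> E"
  unfolding Eplus_def by blast

lemma mu_star_eq:
  assumes ep: "edge_partition E s t \<pi> \<mu>" and e: "e \<in> Eminus E \<pi>" "f \<in> \<mu> e"
  shows "mu_star E \<pi> \<mu> f = e"
  unfolding mu_star_def
proof (rule the_equality)
  show "e \<in> Eminus E \<pi> \<and> f \<in> \<mu> e" using e by blast
  fix e' assume "e' \<in> Eminus E \<pi> \<and> f \<in> \<mu> e'"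
  then show "e' = e" using edge_partitionD(7)[OF ep, of e e'] e by blast
qed

lemma mu_star_im_mu:
  assumes ep: "edge_partition E s t \<pi> \<mu>" and f: "f \<in> im_mu E \<pi> \<mu>"
  shows "mu_star E \<pi> \<mu> f \<in> Eminus E \<pi>" "f \<in> \<mu> (mu_star E \<pi> \<mu> f)"
    and "s (mu_star E \<pi> \<mu> f) = s f" "f \<in> Eplus E \<pi>"
proof -
  obtain e where e: "e \<in> Eminus E \<pi>" "f \<in> \<mu> e" using f unfolding im_mu_def by blast
  then show "mu_star E \<pi> \<mu> f \<in> Eminus E \<pi>" "f \<in> \<mu> (mu_star E \<pi> \<mu> f)"
    and "s (mu_star E \<pi> \<mu> f) = s f" "f \<in> Eplus E \<pi>"
    using mu_star_eq[OF ep e] edge_partitionD(4,5)[OF ep e(1)] e(2) by auto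
qed

lemma out_functional_image:
  assumes F: "out_functional N F s B" and src: "\<And>x. x \<in> F \<Longrightarrow> s (h x) = s x"
  shows "out_functional N (h ` F) s B"
proof -
  have "inj_on s (h ` F)"
  proof (rule inj_onI)
    fix y1 y2 assume "y1 \<in> h ` F" "y2 \<in> h ` F" "s y1 = s y2"
    then obtain x1 x2 where "x1 \<in> F" "x2 \<in> F" "y1 = h x1" "y2 = h x2" "s x1 = s x2"
      using src by auto
    then show "y1 = y2" using F inj_onD[of s F x1 x2] unfolding out_functional_def by simp
  qed
  then show ?thesis using F src unfolding out_functional_def by force
qed

definition swap_edges :: "'e set \<Rightarrow> ('e \<Rightarrow> 'r::ordered_ring) \<Rightarrow> ('e \<Rightarrow> 'e set) \<Rightarrow> 'e set \<Rightarrow> 'e set \<Rightarrow> 'e set" where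
  "swap_edges E \<pi> \<mu> X F = (F - X) \<union> mu_star E \<pi> \<mu> ` X"

lemma swap_edges_eq_image:
  "X \<subseteq> F \<Longrightarrow> swap_edges E \<pi> \<mu> X F = (\<lambda>x. if x \<in> X then mu_star E \<pi> \<mu> x else x) ` F"
  unfolding swap_edges_def by (auto simp: image_iff)

lemma Efam_iff:
  "X \<in> Efam N E s t \<pi> \<mu> B F \<longleftrightarrow> X \<subseteq> F \<inter> im_mu E \<pi> \<mu> \<and> swap_edges E \<pi> \<mu> X F \<in> Theta N E s t B"
  unfolding Efam_def swap_edges_def by blast

lemma psi_eq_swap_edges: "psi N E s t \<pi> \<mu> B F = swap_edges E \<pi> \<mu> (Ezeta N E s t \<pi> \<mu> B F) F"
  unfolding psi_def swap_edges_def ..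

lemma swap_edges_out_functional:
  assumes ep: "edge_partition E s t \<pi> \<mu>" and F: "rooted_forest N E s t B F"
    and X: "X \<subseteq> F \<inter> im_mu E \<pi> \<mu>"
  shows "swap_edges E \<pi> \<mu> X F \<subseteq> E" "out_functional N (swap_edges E \<pi> \<mu> X F) s B"
proof -
  have "mu_star E \<pi> \<mu> ` X \<subseteq> Eminus E \<pi>" using mu_star_im_mu(1)[OF ep] X by blast
  then have "mu_star E \<pi> \<mu> ` X \<subseteq> E" using Eminus_subset[of E \<pi>] by blast
  then show "swap_edges E \<pi> \<mu> X F \<subseteq> E" using F unfolding swap_edges_def rooted_forest_def by blast
  show "out_functional N (swap_edges E \<pi> \<mu> X F) s B"
    unfolding swap_edges_eq_image[of X F, OF subset_trans[OF X Int_lower1]]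
    using F mu_star_im_mu(3)[OF ep] X unfolding rooted_forest_def
    by (intro out_functional_image) auto
qed

lemma swap_edges_Un_diff:
  "y \<in> swap_edges E \<pi> \<mu> (X1 \<union> X2) F \<Longrightarrow> y \<notin> swap_edges E \<pi> \<mu> X1 F \<Longrightarrow> \<exists>f\<in>X2 - X1. y = mu_star E \<pi> \<mu> f"
  unfolding swap_edges_def by blast

text \<open>A directed cycle of the combined swap must use a swapped-in edge from each side; these are
  two distinct negative edges (they leave different nodes), which condition (ii) forbids.\<close>
lemma swap_edges_Un_dacyclic:
  assumes ep: "edge_partition E s t \<pi> \<mu>" and F: "rooted_forest N E s t B F"
    and X12: "X1 \<union> X2 \<subseteq> F \<inter> im_mu E \<pi> \<mu>"
    and acyc: "dacyclic (swap_edges E \<pi> \<mu> X1 F) s t" "dacyclic (swap_edges E \<pi> \<mu> X2 F) s t"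
  shows "dacyclic (swap_edges E \<pi> \<mu> (X1 \<union> X2) F) s t"
  unfolding dacyclic_def
proof (intro allI notI)
  let ?ms = "mu_star E \<pi> \<mu>" and ?sw = "\<lambda>X. swap_edges E \<pi> \<mu> X F"
  fix es assume cyc: "dcycle (?sw (X1 \<union> X2)) s t es"
  have "\<not> set es \<subseteq> ?sw X1" "\<not> set es \<subseteq> ?sw X2"
    using acyc dcycle_mono[OF cyc, of "?sw X1"] dcycle_mono[OF cyc, of "?sw X2"]
    unfolding dacyclic_def by blast+
  then obtain y1 y2 where y: "y1 \<in> set es" "y1 \<notin> ?sw X1" "y2 \<in> set es" "y2 \<notin> ?sw X2"
    by blast
  have "set es \<subseteq> ?sw (X1 \<union> X2)" "set es \<subseteq> ?sw (X2 \<union> X1)"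
    using dcycle_subset[OF cyc] by (simp_all add: Un_commute)
  then have "\<exists>f\<in>X2 - X1. y1 = ?ms f" "\<exists>f\<in>X1 - X2. y2 = ?ms f"
    using swap_edges_Un_diff[OF _ y(2)] swap_edges_Un_diff[OF _ y(4)] y(1,3) by blast+
  then obtain f1 f2 where f: "f2 \<in> X2" "f2 \<notin> X1" "y1 = ?ms f2" "f1 \<in> X1" "f1 \<notin> X2" "y2 = ?ms f1"
    by blast
  have "f1 \<in> F" "f2 \<in> F" "f1 \<noteq> f2" using f X12 by auto
  then have "s f1 \<noteq> s f2"
    using F inj_onD[of s F f1 f2] unfolding rooted_forest_def out_functional_def by blast
  moreover have "s y1 = s f2" "s y2 = s f1" using f X12 mu_star_im_mu(3)[OF ep] by auto
  ultimately have "y1 \<noteq> y2" by metis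
  moreover have "y1 \<in> Eminus E \<pi>" "y2 \<in> Eminus E \<pi>" using f X12 mu_star_im_mu(1)[OF ep] by auto
  ultimately have sub: "{y1, y2} \<subseteq> set es \<inter> Eminus E \<pi>" and two: "card {y1, y2} = 2"
    using y by auto
  have "card {y1, y2} \<le> card (set es \<inter> Eminus E \<pi>)" by (rule card_mono[OF _ sub]) simp
  moreover have "dcycle E s t es"
    using dcycle_mono[OF cyc] swap_edges_out_functional(1)[OF ep F X12] dcycle_subset[OF cyc] by blast
  then have "card (set es \<inter> Eminus E \<pi>) \<le> 1" by (rule edge_partitionD(3)[OF ep])
  ultimately show False using two by linarith
qed

lemma Efam_Un:
  assumes wf: "wf_graph N E s t" and BN: "B \<subseteq> N" and ep: "edge_partition E s t \<pi> \<mu>"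
    and F: "rooted_forest N E s t B F"
    and X1: "X1 \<in> Efam N E s t \<pi> \<mu> B F" and X2: "X2 \<in> Efam N E s t \<pi> \<mu> B F"
  shows "X1 \<union> X2 \<in> Efam N E s t \<pi> \<mu> B F"
proof -
  let ?sw = "\<lambda>X. swap_edges E \<pi> \<mu> X F"
  have X12: "X1 \<union> X2 \<subseteq> F \<inter> im_mu E \<pi> \<mu>" using X1 X2 unfolding Efam_iff by blast
  have T: "?sw X1 \<in> Theta N E s t B" "?sw X2 \<in> Theta N E s t B"
    using X1 X2 unfolding Efam_iff by blast+
  have "dacyclic (?sw (X1 \<union> X2)) s t"
    using swap_edges_Un_dacyclic[OF ep F X12 Theta_dacyclic[OF wf T(1)] Theta_dacyclic[OF wf T(2)]] .
  then have "rooted_forest N E s t B (?sw (X1 \<union> X2))"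
    using swap_edges_out_functional[OF ep F X12] unfolding rooted_forest_def by blast
  then show ?thesis unfolding Efam_iff using X12 rooted_forest_Theta[OF wf BN] by simp
qed

section \<open>Replacing negative edges\<close>

definition mu_replacement :: "'e set \<Rightarrow> ('e \<Rightarrow> 'r::ordered_ring) \<Rightarrow> ('e \<Rightarrow> 'e set) \<Rightarrow> 'e set \<Rightarrow> ('e \<Rightarrow> 'e) \<Rightarrow> bool" where
  "mu_replacement E \<pi> \<mu> \<zeta> W \<longleftrightarrow> (\<forall>e\<in>\<zeta>. W e = e \<or> e \<in> Eminus E \<pi> \<and> W e \<in> \<mu> e)"

lemma mu_replacement_source:
  assumes ep: "edge_partition E s t \<pi> \<mu>" and W: "mu_replacement E \<pi> \<mu> \<zeta> W" and e: "e \<in> \<zeta>"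
  shows "s (W e) = s e"
  using W e edge_partitionD(5)[OF ep, of e "W e"] unfolding mu_replacement_def by auto

lemma mu_replacement_subset:
  assumes ep: "edge_partition E s t \<pi> \<mu>" and W: "mu_replacement E \<pi> \<mu> \<zeta> W" and "\<zeta> \<subseteq> E"
  shows "W ` \<zeta> \<subseteq> E"
proof
  fix x assume "x \<in> W ` \<zeta>"
  then obtain e where e: "e \<in> \<zeta>" "x = W e" by blast
  show "x \<in> E"
  proof (cases "W e = e")
    case False
    then have "x \<in> Eplus E \<pi>" using W e edge_partitionD(4)[OF ep, of e] unfolding mu_replacement_def by blast
    then show ?thesis using Eplus_subset[of E \<pi>] by blast
  qed (use e \<open>\<zeta> \<subseteq> E\<close> in auto)
qed

lemma mu_replacement_new_edge:
  assumes ep: "edge_partition E s t \<pi> \<mu>" and W: "mu_replacement E \<pi> \<mu> \<zeta> W"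
    and e: "e \<in> \<zeta>" "W e \<notin> \<zeta>"
  shows "e \<in> Eminus E \<pi>" "W e \<in> \<mu> e" "mu_star E \<pi> \<mu> (W e) = e"
proof -
  show "e \<in> Eminus E \<pi>" "W e \<in> \<mu> e" using W e unfolding mu_replacement_def by force+
  then show "mu_star E \<pi> \<mu> (W e) = e" by (rule mu_star_eq[OF ep])
qed

lemma mu_replacement_fixed:
  assumes ep: "edge_partition E s t \<pi> \<mu>" and W: "mu_replacement E \<pi> \<mu> \<zeta> W"
    and inj: "inj_on s \<zeta>" and e: "e \<in> \<zeta>" "W e \<in> \<zeta>"
  shows "W e = e"
  using inj_onD[OF inj mu_replacement_source[OF ep W e(1)] e(2,1)] .

lemma swap_edges_mu_replacement:
  assumes ep: "edge_partition E s t \<pi> \<mu>" and W: "mu_replacement E \<pi> \<mu> \<zeta> W" and inj: "inj_on s \<zeta>"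
  shows "swap_edges E \<pi> \<mu> (W ` \<zeta> - \<zeta>) (W ` \<zeta>) = \<zeta>"
proof -
  have "mu_star E \<pi> \<mu> x \<in> \<zeta>" if "x \<in> W ` \<zeta> - \<zeta>" for x
    using that mu_replacement_new_edge(3)[OF ep W] by auto
  moreover have "y \<in> W ` \<zeta> \<or> y \<in> mu_star E \<pi> \<mu> ` (W ` \<zeta> - \<zeta>)" if y: "y \<in> \<zeta>" for y
  proof (cases "W y \<in> \<zeta>")
    case True
    then show ?thesis using mu_replacement_fixed[OF ep W inj y] y by (metis image_eqI)
  next
    case False
    then have "W y \<in> W ` \<zeta> - \<zeta>" using y by blast
    then show ?thesis using mu_replacement_new_edge(3)[OF ep W y False] by (metis image_eqI)
  qed
  ultimately show ?thesis unfolding swap_edges_def by blast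
qed

lemma odot_eq_mu_replacement:
  assumes ep: "edge_partition E s t \<pi> \<mu>" and "\<zeta> \<subseteq> E"
  shows "{(\<zeta> \<inter> Eplus E \<pi>) \<union> X | X. X \<in> odot (\<zeta> \<inter> Eminus E \<pi>) (\<lambda>e. insert e (\<mu> e))}
       = {W ` \<zeta> | W. mu_replacement E \<pi> \<mu> \<zeta> W}"
proof -
  have \<zeta>: "\<zeta> = (\<zeta> \<inter> Eplus E \<pi>) \<union> (\<zeta> \<inter> Eminus E \<pi>)" "(\<zeta> \<inter> Eplus E \<pi>) \<inter> Eminus E \<pi> = {}"
    using assms(2) edge_partitionD(1,2)[OF ep] by blast+
  have "(\<zeta> \<inter> Eplus E \<pi>) \<union> w ` (\<zeta> \<inter> Eminus E \<pi>) = W ` \<zeta>"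
    if "\<And>e. e \<in> \<zeta> \<inter> Eplus E \<pi> \<Longrightarrow> W e = e" "\<And>e. e \<in> \<zeta> \<inter> Eminus E \<pi> \<Longrightarrow> W e = w e" for w W
  proof -
    have "W ` \<zeta> = W ` (\<zeta> \<inter> Eplus E \<pi>) \<union> W ` (\<zeta> \<inter> Eminus E \<pi>)" using \<zeta>(1) by (metis image_Un)
    then show ?thesis using that by simp
  qed
  note image = this
  show ?thesis
  proof (intro set_eqI iffI)
    fix \<xi> assume "\<xi> \<in> {(\<zeta> \<inter> Eplus E \<pi>) \<union> X | X. X \<in> odot (\<zeta> \<inter> Eminus E \<pi>) (\<lambda>e. insert e (\<mu> e))}"
    then obtain w where \<xi>: "\<xi> = (\<zeta> \<inter> Eplus E \<pi>) \<union> w ` (\<zeta> \<inter> Eminus E \<pi>)"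
      and w: "\<forall>e\<in>\<zeta> \<inter> Eminus E \<pi>. w e \<in> insert e (\<mu> e)"
      unfolding odot_def by blast
    define W where "W e = (if e \<in> Eminus E \<pi> then w e else e)" for e
    have "mu_replacement E \<pi> \<mu> \<zeta> W" unfolding mu_replacement_def W_def using w by auto
    moreover have "\<xi> = W ` \<zeta>" unfolding \<xi> using \<zeta>(2) by (intro image) (auto simp: W_def)
    ultimately show "\<xi> \<in> {W ` \<zeta> | W. mu_replacement E \<pi> \<mu> \<zeta> W}" by blast
  next
    fix \<xi> assume "\<xi> \<in> {W ` \<zeta> | W. mu_replacement E \<pi> \<mu> \<zeta> W}"
    then obtain W where \<xi>: "\<xi> = W ` \<zeta>" and W: "mu_replacement E \<pi> \<mu> \<zeta> W" by blast
    have "\<forall>e\<in>\<zeta> \<inter> Eminus E \<pi>. W e \<in> insert e (\<mu> e)" using W unfolding mu_replacement_def by auto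
    then have "W ` (\<zeta> \<inter> Eminus E \<pi>) \<in> odot (\<zeta> \<inter> Eminus E \<pi>) (\<lambda>e. insert e (\<mu> e))"
      unfolding odot_def by blast
    moreover have "\<xi> = (\<zeta> \<inter> Eplus E \<pi>) \<union> W ` (\<zeta> \<inter> Eminus E \<pi>)"
      unfolding \<xi> using W \<zeta>(2) unfolding mu_replacement_def by (intro image[symmetric]) auto
    ultimately show "\<xi> \<in> {(\<zeta> \<inter> Eplus E \<pi>) \<union> X | X. X \<in> odot (\<zeta> \<inter> Eminus E \<pi>) (\<lambda>e. insert e (\<mu> e))}"
      by blast
  qed
qed

lemma dcycle_depth_walk:
  assumes wf: "wf_graph N E s t" and \<zeta>: "rooted_forest N E s t B \<zeta>"
    and cyc: "dcycle F s t es" and j: "j < length es"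
    and in_\<zeta>: "\<forall>i<k. es ! ((j + i) mod length es) \<in> \<zeta>"
  shows "depth \<zeta> s t B (s (es ! j)) = depth \<zeta> s t B (s (es ! ((j + k) mod length es))) + k"
  using in_\<zeta>
proof (induction k)
  case 0
  then show ?case using j by simp
next
  case (Suc k)
  let ?n = "length es"
  let ?e = "es ! ((j + k) mod ?n)"
  have "?e \<in> \<zeta>" using Suc.prems by simp
  moreover have "t ?e = s (es ! ((j + Suc k) mod ?n))"
    using cyc j unfolding dcycle_def by (simp add: mod_Suc_eq)
  ultimately have "depth \<zeta> s t B (s ?e) = Suc (depth \<zeta> s t B (s (es ! ((j + Suc k) mod ?n))))"
    using depth_edge(1)[OF wf \<zeta>] by metis
  then show ?case using Suc by simp
qed

text \<open>Among the replaced edges of a cycle pick \<open>x\<^sub>0\<close>, replacing \<open>e\<^sub>0\<close>, whose source has least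
  depth in \<open>\<zeta>\<close>. By (iii)(b) the cycle passes through \<open>t e\<^sub>0\<close>, one level below \<open>s x\<^sub>0 = s e\<^sub>0\<close>;
  walking on from there along \<open>\<zeta>\<close>-edges, depth keeps dropping until the next replaced edge,
  which therefore starts strictly lower than \<open>x\<^sub>0\<close>.\<close>
lemma mu_replacement_dacyclic:
  assumes wf: "wf_graph N E s t" and ep: "edge_partition E s t \<pi> \<mu>"
    and \<zeta>: "rooted_forest N E s t B \<zeta>" and W: "mu_replacement E \<pi> \<mu> \<zeta> W"
  shows "dacyclic (W ` \<zeta>) s t"
  unfolding dacyclic_def
proof (intro allI notI)
  fix es assume cyc: "dcycle (W ` \<zeta>) s t es"
  let ?d = "\<lambda>x. depth \<zeta> s t B (s x)" and ?n = "length es"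
  have \<zeta>E: "\<zeta> \<subseteq> E" using \<zeta> unfolding rooted_forest_def by blast
  have cycE: "dcycle E s t es"
    using dcycle_mono[OF cyc] dcycle_subset[OF cyc] mu_replacement_subset[OF ep W \<zeta>E] by blast
  have "\<not> set es \<subseteq> \<zeta>"
    using \<zeta> dcycle_mono[OF cyc, of \<zeta>] unfolding rooted_forest_def dacyclic_def by blast
  then obtain x where "x \<in> set es" "x \<notin> \<zeta>" by blast
  then obtain x0 where x0: "x0 \<in> set es" "x0 \<notin> \<zeta>"
    and x0_min: "\<And>y. y \<in> set es \<Longrightarrow> y \<notin> \<zeta> \<Longrightarrow> ?d x0 \<le> ?d y"
    using ex_has_least_nat[of "\<lambda>y. y \<in> set es \<and> y \<notin> \<zeta>" x ?d] by blast
  obtain e0 where e0: "e0 \<in> \<zeta>" "x0 = W e0"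
    using x0(1) dcycle_subset[OF cyc] by blast
  note new = mu_replacement_new_edge[OF ep W e0(1) x0(2)[unfolded e0(2)]]
  have "t e0 \<in> s ` set es" using edge_partitionD(6)[OF ep new(1,2) cycE] x0(1) e0(2) by blast
  then obtain j where j: "j < ?n" "s (es ! j) = t e0" by (metis imageE in_set_conv_nth)
  obtain i0 where i0: "i0 < ?n" "es ! i0 = x0" using x0(1) by (metis in_set_conv_nth)
  have "es ! ((j + (?n - j + i0)) mod ?n) \<notin> \<zeta>" using i0 j x0(2) by simp
  then have ex: "\<exists>k. es ! ((j + k) mod ?n) \<notin> \<zeta>" by blast
  define k where "k = (LEAST k. es ! ((j + k) mod ?n) \<notin> \<zeta>)"
  have "(j + k) mod ?n < ?n" using j(1) by (intro mod_less_divisor) linarith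
  then have y: "es ! ((j + k) mod ?n) \<notin> \<zeta>" "es ! ((j + k) mod ?n) \<in> set es"
    using LeastI_ex[OF ex] unfolding k_def by auto
  have "\<forall>i<k. es ! ((j + i) mod ?n) \<in> \<zeta>" using not_less_Least[of _ "\<lambda>k. es ! ((j + k) mod ?n) \<notin> \<zeta>"] k_def by blast
  then have "depth \<zeta> s t B (t e0) = ?d (es ! ((j + k) mod ?n)) + k"
    using dcycle_depth_walk[OF wf \<zeta> cyc j(1)] j(2) by simp
  moreover have "?d x0 = Suc (depth \<zeta> s t B (t e0))"
    using depth_edge(1)[OF wf \<zeta> e0(1)] mu_replacement_source[OF ep W e0(1)] e0(2) by simp
  moreover have "?d x0 \<le> ?d (es ! ((j + k) mod ?n))" using x0_min y by blast
  ultimately show False by linarith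
qed

lemma mu_replacement_rooted_forest:
  assumes wf: "wf_graph N E s t" and ep: "edge_partition E s t \<pi> \<mu>"
    and \<zeta>: "rooted_forest N E s t B \<zeta>" and W: "mu_replacement E \<pi> \<mu> \<zeta> W"
  shows "rooted_forest N E s t B (W ` \<zeta>)"
proof -
  have "\<zeta> \<subseteq> E" "out_functional N \<zeta> s B" using \<zeta> unfolding rooted_forest_def by blast+
  then have "W ` \<zeta> \<subseteq> E" "out_functional N (W ` \<zeta>) s B"
    using mu_replacement_subset[OF ep W] out_functional_image[of N \<zeta> s B W, OF _ mu_replacement_source[OF ep W]]
    by blast+
  then show ?thesis
    unfolding rooted_forest_def using mu_replacement_dacyclic[OF wf ep \<zeta> W] by blast
qed

lemma swap_edges_swap_edges:
  "Y \<inter> R = {} \<Longrightarrow> Y \<inter> mu_star E \<pi> \<mu> ` R = {} \<Longrightarrow>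
    swap_edges E \<pi> \<mu> Y (swap_edges E \<pi> \<mu> R F) = swap_edges E \<pi> \<mu> (Y \<union> R) F"
  unfolding swap_edges_def by blast

text \<open>Undoing the replacement is a swap, and a strictly larger swappable set would yield a
  nonempty swappable set for \<open>\<zeta>\<close>, impossible for \<open>\<zeta> \<in> \<Lambda>\<close>.\<close>
lemma Ezeta_mu_replacement:
  assumes wf: "wf_graph N E s t" and BN: "B \<subseteq> N" and ep: "edge_partition E s t \<pi> \<mu>"
    and \<zeta>: "\<zeta> \<in> Lambda N E s t \<pi> \<mu> B" and W: "mu_replacement E \<pi> \<mu> \<zeta> W"
  shows "Ezeta N E s t \<pi> \<mu> B (W ` \<zeta>) = W ` \<zeta> - \<zeta>"
proof -
  let ?\<xi> = "W ` \<zeta>" and ?R = "W ` \<zeta> - \<zeta>" and ?ms = "mu_star E \<pi> \<mu>"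
  have \<zeta>T: "\<zeta> \<in> Theta N E s t B" and \<zeta>min: "Efam N E s t \<pi> \<mu> B \<zeta> = {{}}"
    using \<zeta> unfolding Lambda_def by blast+
  have rf: "rooted_forest N E s t B \<zeta>" using \<zeta>T Theta_iff_rooted_forest[OF wf BN, of \<zeta>] by blast
  then have inj: "inj_on s \<zeta>" unfolding rooted_forest_def out_functional_def by blast
  have rf\<xi>: "rooted_forest N E s t B ?\<xi>" by (rule mu_replacement_rooted_forest[OF wf ep rf W])
  have swap: "swap_edges E \<pi> \<mu> ?R ?\<xi> = \<zeta>" by (rule swap_edges_mu_replacement[OF ep W inj])
  have "?R \<subseteq> im_mu E \<pi> \<mu>"
  proof
    fix x assume "x \<in> ?R"
    then obtain e where "e \<in> \<zeta>" "x = W e" "W e \<notin> \<zeta>" by blast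
    then show "x \<in> im_mu E \<pi> \<mu>"
      using mu_replacement_new_edge(1,2)[OF ep W] unfolding im_mu_def by blast
  qed
  then have R: "?R \<in> Efam N E s t \<pi> \<mu> B ?\<xi>" unfolding Efam_iff swap using \<zeta>T by blast
  have "X \<subseteq> ?R" if X: "X \<in> Efam N E s t \<pi> \<mu> B ?\<xi>" for X
  proof -
    have XR: "X \<union> ?R \<in> Efam N E s t \<pi> \<mu> B ?\<xi>" by (rule Efam_Un[OF wf BN ep rf\<xi> X R])
    have Y: "X - ?R \<subseteq> \<zeta> \<inter> im_mu E \<pi> \<mu>" using X unfolding Efam_iff by blast
    then have "X - ?R \<subseteq> Eplus E \<pi>" using mu_star_im_mu(4)[OF ep] by blast
    moreover have "?ms ` ?R \<subseteq> Eminus E \<pi>" using mu_star_im_mu(1)[OF ep] \<open>?R \<subseteq> im_mu E \<pi> \<mu>\<close> by blast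
    ultimately have "(X - ?R) \<inter> ?ms ` ?R = {}" using edge_partitionD(2)[OF ep] by blast
    then have "swap_edges E \<pi> \<mu> (X - ?R) (swap_edges E \<pi> \<mu> ?R ?\<xi>)
        = swap_edges E \<pi> \<mu> ((X - ?R) \<union> ?R) ?\<xi>"
      by (intro swap_edges_swap_edges) blast+
    then have "swap_edges E \<pi> \<mu> (X - ?R) \<zeta> = swap_edges E \<pi> \<mu> (X \<union> ?R) ?\<xi>"
      unfolding swap by simp
    then have "X - ?R \<in> Efam N E s t \<pi> \<mu> B \<zeta>" using Y XR unfolding Efam_iff by simp
    then have "X - ?R = {}" using \<zeta>min by simp
    then show ?thesis by blast
  qed
  then show ?thesis unfolding Ezeta_def using Union_upper[OF R] by (intro equalityI Union_least)
qed

lemma mu_replacement_of_swap_edges: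
  assumes ep: "edge_partition E s t \<pi> \<mu>" and inj: "inj_on s F" and X: "X \<subseteq> F \<inter> im_mu E \<pi> \<mu>"
  defines "W \<equiv> \<lambda>e. out_edge F s (s e)"
  shows "mu_replacement E \<pi> \<mu> (swap_edges E \<pi> \<mu> X F) W" "F = W ` swap_edges E \<pi> \<mu> X F"
proof -
  let ?ms = "mu_star E \<pi> \<mu>"
  have W_eq: "W x = x" if "x \<in> F" for x unfolding W_def using out_edge_eq[OF inj that] .
  have W_ms: "W (?ms f) = f" if "f \<in> X" for f
  proof -
    have "s (?ms f) = s f" using mu_star_im_mu(3)[OF ep, of f] X that by blast
    then show ?thesis using W_eq[of f] X that unfolding W_def by auto
  qed
  show "mu_replacement E \<pi> \<mu> (swap_edges E \<pi> \<mu> X F) W"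
    unfolding mu_replacement_def swap_edges_def
    using W_eq W_ms mu_star_im_mu(1,2)[OF ep] X by auto
  show "F = W ` swap_edges E \<pi> \<mu> X F"
  proof
    show "F \<subseteq> W ` swap_edges E \<pi> \<mu> X F"
    proof
      fix x assume x: "x \<in> F"
      show "x \<in> W ` swap_edges E \<pi> \<mu> X F"
      proof (cases "x \<in> X")
        case True
        then have "?ms x \<in> swap_edges E \<pi> \<mu> X F" unfolding swap_edges_def by blast
        then show ?thesis using W_ms[OF True] by (metis image_eqI)
      next
        case False
        then have "x \<in> swap_edges E \<pi> \<mu> X F" using x unfolding swap_edges_def by blast
        then show ?thesis using W_eq[OF x] by (metis image_eqI)
      qed
    qed
    show "W ` swap_edges E \<pi> \<mu> X F \<subseteq> F"
      unfolding swap_edges_def using W_eq W_ms X by auto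
  qed
qed

lemma mu_replacement_if_psi_eq:
  assumes wf: "wf_graph N E s t" and BN: "B \<subseteq> N" and ep: "edge_partition E s t \<pi> \<mu>"
    and \<xi>: "\<xi> \<in> Theta N E s t B" "psi N E s t \<pi> \<mu> B \<xi> = \<zeta>"
  shows "\<exists>W. mu_replacement E \<pi> \<mu> \<zeta> W \<and> \<xi> = W ` \<zeta>"
proof -
  have inj: "inj_on s \<xi>" by (rule Theta_inj_on_source[OF wf BN \<xi>(1)])
  have Z: "Ezeta N E s t \<pi> \<mu> B \<xi> \<subseteq> \<xi> \<inter> im_mu E \<pi> \<mu>"
    unfolding Ezeta_def Efam_def by blast
  have "swap_edges E \<pi> \<mu> (Ezeta N E s t \<pi> \<mu> B \<xi>) \<xi> = \<zeta>"
    using \<xi>(2) by (simp add: psi_eq_swap_edges)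
  then show ?thesis using mu_replacement_of_swap_edges[OF ep inj Z] by metis
qed

lemma psi_mu_replacement:
  assumes wf: "wf_graph N E s t" and BN: "B \<subseteq> N" and ep: "edge_partition E s t \<pi> \<mu>"
    and \<zeta>: "\<zeta> \<in> Lambda N E s t \<pi> \<mu> B" and W: "mu_replacement E \<pi> \<mu> \<zeta> W"
  shows "W ` \<zeta> \<in> Theta N E s t B" "psi N E s t \<pi> \<mu> B (W ` \<zeta>) = \<zeta>"
proof -
  have rf: "rooted_forest N E s t B \<zeta>"
    using \<zeta> Theta_iff_rooted_forest[OF wf BN, of \<zeta>] unfolding Lambda_def by blast
  show "W ` \<zeta> \<in> Theta N E s t B"
    by (rule rooted_forest_Theta[OF wf BN mu_replacement_rooted_forest[OF wf ep rf W]])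
  have "inj_on s \<zeta>" using rf unfolding rooted_forest_def out_functional_def by blast
  then show "psi N E s t \<pi> \<mu> B (W ` \<zeta>) = \<zeta>"
    using swap_edges_mu_replacement[OF ep W] Ezeta_mu_replacement[OF wf BN ep \<zeta> W]
    by (simp add: psi_eq_swap_edges)
qed

theorem lemma3p5:
  fixes m :: nat and E :: "'e set" and s t :: "'e \<Rightarrow> nat"
    and \<pi> :: "'e \<Rightarrow> 'r::ordered_ring" and \<mu> :: "'e \<Rightarrow> 'e set" and B :: "nat set"
  assumes "wf_graph {1..m+1} E s t"
    and "edge_partition E s t \<pi> \<mu>"
    and "B \<subseteq> {1..m+1}"
    and "\<zeta> \<in> Lambda {1..m+1} E s t \<pi> \<mu> B"
  shows "{\<xi> \<in> Theta {1..m+1} E s t B. psi {1..m+1} E s t \<pi> \<mu> B \<xi> = \<zeta>}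
       = {(\<zeta> \<inter> Eplus E \<pi>) \<union> X | X. X \<in> odot (\<zeta> \<inter> Eminus E \<pi>) (\<lambda>e. insert e (\<mu> e))}"
proof -
  note wf = assms(1) and ep = assms(2) and BN = assms(3) and \<zeta> = assms(4)
  have "{\<xi> \<in> Theta {1..m+1} E s t B. psi {1..m+1} E s t \<pi> \<mu> B \<xi> = \<zeta>}
      = {W ` \<zeta> | W. mu_replacement E \<pi> \<mu> \<zeta> W}"
  proof (intro set_eqI iffI)
    fix \<xi> assume "\<xi> \<in> {\<xi> \<in> Theta {1..m+1} E s t B. psi {1..m+1} E s t \<pi> \<mu> B \<xi> = \<zeta>}"
    then show "\<xi> \<in> {W ` \<zeta> | W. mu_replacement E \<pi> \<mu> \<zeta> W}"
      using mu_replacement_if_psi_eq[OF wf BN ep, of \<xi> \<zeta>] by blast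
  next
    fix \<xi> assume "\<xi> \<in> {W ` \<zeta> | W. mu_replacement E \<pi> \<mu> \<zeta> W}"
    then obtain W where "\<xi> = W ` \<zeta>" "mu_replacement E \<pi> \<mu> \<zeta> W" by blast
    then show "\<xi> \<in> {\<xi> \<in> Theta {1..m+1} E s t B. psi {1..m+1} E s t \<pi> \<mu> B \<xi> = \<zeta>}"
      using psi_mu_replacement[OF wf BN ep \<zeta>] by simp
  qed
  also have "\<dots> = {(\<zeta> \<inter> Eplus E \<pi>) \<union> X | X. X \<in> odot (\<zeta> \<inter> Eminus E \<pi>) (\<lambda>e. insert e (\<mu> e))}"
  proof -
    have "\<zeta> \<in> Theta {1..m+1} E s t B" using \<zeta> unfolding Lambda_def by blast
    then show ?thesis by (rule odot_eq_mu_replacement[OF ep ThetaD(1), symmetric])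
  qed
  finally show ?thesis .
qed

end
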